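(* Let $p(x)=a_dx^d+\cdots+a_1x$ be a real polynomial of degree $d\ge2$ with $p(0)=0$, $p'(0)=\lambda>1$, whose Fatou component $\mathcal{F}_\infty$ containing $\infty$ contains an angular region $W_\beta=\{z\ne0:|\arg z|<\beta\}$ for some $\beta>0$. Let $\Phi$ be the entire solution of $\Phi(\lambda z)=p(\Phi(z))$, $\Phi(0)=0$, $\Phi'(0)=1$, let $\rho=\log_\lambda d$, and let $F$ be the $1$-periodic holomorphic function on $\{|\Im w|<\beta/\log\lambda\}$ such that for all $\varepsilon>0$, $M>0$, $\Phi(z)=a_d^{-1/(d-1)}\exp\left(z^\rho F(\log_\lambda z)+o(|z|^{-M})\right)$ uniformly as $|z|\to\infty$ in $|\arg z|\le\beta-\varepsilon$. If $\rho<\frac12$, then $F$ is not constant.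
   Context: $\log_\lambda z=\log z/\log\lambda$. *)

theory Defs
  imports "HOL-Analysis.Analysis" "HOL-Computational_Algebra.Polynomial"
begin

definition normal_family_on :: "(nat \<Rightarrow> complex \<Rightarrow> complex) \<Rightarrow> complex set \<Rightarrow> bool" where
  "normal_family_on f U \<longleftrightarrow>
     (\<forall>r :: nat \<Rightarrow> nat. \<exists>s :: nat \<Rightarrow> nat. strict_mono s \<and>
        ((\<exists>g. \<forall>K. compact K \<and> K \<subseteq> U \<longrightarrow>
                 uniform_limit K (\<lambda>k. f (r (s k))) g sequentially)
         \<or> (\<forall>K. compact K \<and> K \<subseteq> U \<longrightarrow>
                 (\<forall>B. eventually (\<lambda>k. \<forall>z\<in>K. B \<le> norm (f (r (s k)) z)) sequentially))))"

definition fatou_set :: "(complex \<Rightarrow> complex) \<Rightarrow> complex set" where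
  "fatou_set f = {z. \<exists>U. open U \<and> z \<in> U \<and> normal_family_on (\<lambda>n. f ^^ n) U}"

text \<open>Finite part of the Fatou component containing \<infinity>: the points of the Fatou set whose
  connected component (in the Fatou set) contains a punctured neighbourhood of \<infinity>.\<close>
definition fatou_component_infty :: "(complex \<Rightarrow> complex) \<Rightarrow> complex set" where
  "fatou_component_infty f =
     {z \<in> fatou_set f. \<exists>R. \<forall>w. R < norm w \<longrightarrow> w \<in> connected_component_set (fatou_set f) z}"

definition angular_region :: "real \<Rightarrow> complex set" where
  "angular_region \<beta> = {z. z \<noteq> 0 \<and> \<bar>Arg z\<bar> < \<beta>}"

end

theory Submission
  imports Defs "HOL-Complex_Analysis.Complex_Analysis"
begin

text \<open>
  Suppose \<open>F\<close> were constant, \<open>F = c\<close>. The substitution \<open>Q u = \<Phi> (u powr (1 / \<rho>))\<close> turns the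
  asymptotics into \<open>Q u = A * exp (c * u + o(1))\<close> in a sector around the positive axis, and the
  functional equation into \<open>Q (d * u) = p (Q u)\<close>, because \<open>d = lam powr \<rho>\<close>. Small positive reals
  are mapped by \<open>\<Phi>\<close> into the basin of infinity, so their orbits escape, which forces \<open>Re c > 0\<close>.
  With \<open>T = 2 * pi * \<i> / c\<close>, the \<open>p\<close>-orbits of \<open>Q u\<close> and \<open>Q (u + T)\<close> then agree up to a
  relative error \<open>O(d ^ -k)\<close>, whereas \<open>p\<close> enlarges relative errors near infinity. Hence
  \<open>Q (u + T) = Q u\<close>, first far out along the positive axis and then, by analytic continuation, on
  the whole half-plane \<open>Re (c * u) > 0\<close>, where consequently \<open>Q u = A * exp (c * u + o(1))\<close>.
  But \<open>Q u\<close> only depends on \<open>u powr (1 / \<rho>)\<close>, so \<open>Q\<close> takes the same values on two rays whose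
  arguments differ by \<open>2 * pi * \<rho>\<close>. If \<open>\<rho> < 1 / 2\<close>, both rays fit into that half-plane, and
  their asymptotics are incompatible.
\<close>

section \<open>Polynomials near infinity\<close>

lemma norm_one_plus_power_sub_one_le:
  fixes \<eta> :: "'a::real_normed_field"
  assumes "norm \<eta> \<le> 1"
  shows "norm ((1 + \<eta>) ^ n - 1) \<le> real n * 2 ^ n * norm \<eta>"
proof (induction n)
  case (Suc n)
  have "norm (1 + \<eta>) \<le> 2"
    using assms norm_triangle_ineq[of 1 \<eta>] by simp
  have "(1 + \<eta>) ^ Suc n - 1 = (1 + \<eta>) * ((1 + \<eta>) ^ n - 1) + \<eta>"
    by (simp add: algebra_simps)
  then have "norm ((1 + \<eta>) ^ Suc n - 1) \<le> norm (1 + \<eta>) * norm ((1 + \<eta>) ^ n - 1) + norm \<eta>"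
    by (metis norm_mult norm_triangle_ineq)
  also have "\<dots> \<le> 2 * (real n * 2 ^ n * norm \<eta>) + 2 ^ Suc n * norm \<eta>"
  proof -
    have "(1::real) \<le> 2 ^ Suc n"
      by (rule one_le_power) simp
    then show ?thesis
      using \<open>norm (1 + \<eta>) \<le> 2\<close> Suc.IH
      by (intro add_mono mult_mono) (auto simp: mult_le_cancel_right1 simp del: power_Suc)
  qed
  finally show ?case
    by (simp add: algebra_simps)
qed simp

lemma norm_one_plus_power_sub_linear_le:
  fixes \<eta> :: "'a::real_normed_field"
  assumes "norm \<eta> \<le> 1"
  shows "norm ((1 + \<eta>) ^ n - 1 - of_nat n * \<eta>) \<le> real n * 2 ^ n * norm \<eta> ^ 2"
proof (induction n)
  case (Suc n)
  have "norm (1 + \<eta>) \<le> 2"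
    using assms norm_triangle_ineq[of 1 \<eta>] by simp
  have "(1 + \<eta>) ^ Suc n - 1 - of_nat (Suc n) * \<eta>
      = (1 + \<eta>) * ((1 + \<eta>) ^ n - 1 - of_nat n * \<eta>) + of_nat n * \<eta> ^ 2"
    by (simp add: algebra_simps power2_eq_square)
  then have "norm ((1 + \<eta>) ^ Suc n - 1 - of_nat (Suc n) * \<eta>)
      \<le> norm (1 + \<eta>) * norm ((1 + \<eta>) ^ n - 1 - of_nat n * \<eta>) + real n * norm \<eta> ^ 2"
    by (metis norm_mult norm_of_nat norm_power norm_triangle_ineq)
  also have "\<dots> \<le> 2 * (real n * 2 ^ n * norm \<eta> ^ 2) + 2 ^ Suc n * norm \<eta> ^ 2"
  proof -
    have "real n \<le> 2 ^ Suc n"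
      by (metis Suc_lessD less_exp less_imp_le_nat of_nat_le_iff of_nat_numeral of_nat_power)
    then show ?thesis
      using \<open>norm (1 + \<eta>) \<le> 2\<close> Suc.IH by (intro add_mono mult_mono) auto
  qed
  finally show ?case
    by (simp add: algebra_simps)
qed simp

lemma norm_one_plus_power_sub_one_ge:
  fixes \<eta> :: "'a::real_normed_field"
  assumes "2 \<le> n" "norm \<eta> \<le> 1" "real n * 2 ^ n * norm \<eta> \<le> 1 / 2"
  shows "3 / 2 * norm \<eta> \<le> norm ((1 + \<eta>) ^ n - 1)"
proof -
  have "real n * 2 ^ n * norm \<eta> ^ 2 \<le> norm \<eta> / 2"
    using mult_right_mono[OF assms(3), of "norm \<eta>"] by (simp add: power2_eq_square mult_ac)
  moreover have "2 * norm \<eta> \<le> norm (of_nat n * \<eta>)"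
    using assms(1) by (simp add: norm_mult mult_right_mono)
  moreover have "norm (of_nat n * \<eta>)
      \<le> norm ((1 + \<eta>) ^ n - 1) + norm ((1 + \<eta>) ^ n - 1 - of_nat n * \<eta>)"
    by (metis add_diff_cancel_left' diff_add_cancel norm_minus_commute norm_triangle_sub)
  ultimately show ?thesis
    using norm_one_plus_power_sub_linear_le[OF assms(2), of n] by linarith
qed

lemma norm_sum_lower_powers_le:
  fixes b :: "'a::real_normed_field"
  assumes "1 \<le> norm b" and x: "\<And>j. j < n \<Longrightarrow> norm (x j) \<le> B"
  shows "norm (\<Sum>j<n. c j * b ^ j * x j) \<le> (\<Sum>j<n. norm (c j)) * B * norm b ^ (n - 1)"
proof -
  have "norm (\<Sum>j<n. c j * b ^ j * x j) \<le> (\<Sum>j<n. norm (c j) * (B * norm b ^ (n - 1)))"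
  proof (intro order.trans[OF norm_sum] sum_mono)
    fix j assume "j \<in> {..<n}"
    then have "norm b ^ j \<le> norm b ^ (n - 1)"
      using assms(1) by (intro power_increasing) auto
    then have "norm b ^ j * norm (x j) \<le> B * norm b ^ (n - 1)"
      using x \<open>j \<in> {..<n}\<close>
      by (subst mult.commute) (intro mult_mono, auto intro: order_trans[OF norm_ge_zero])
    then show "norm (c j * b ^ j * x j) \<le> norm (c j) * (B * norm b ^ (n - 1))"
      by (simp add: norm_mult norm_power mult_left_mono mult.assoc)
  qed
  also have "\<dots> = (\<Sum>j<n. norm (c j)) * B * norm b ^ (n - 1)"
    by (simp add: sum_distrib_right mult.assoc)
  finally show ?thesis .
qed

lemma poly_eq_lead_plus_lower:
  fixes q :: "'a::{comm_semiring_0,semiring_1} poly"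
  shows "poly q w = lead_coeff q * w ^ degree q + (\<Sum>j<degree q. coeff q j * w ^ j)"
proof -
  have "{..degree q} = insert (degree q) {..<degree q}"
    by auto
  then show ?thesis
    by (simp add: poly_altdef)
qed

lemma eventually_norm_poly_ge_twice:
  fixes q :: "'a::real_normed_field poly"
  assumes "2 \<le> degree q"
  shows "eventually (\<lambda>b. 2 * norm b \<le> norm (poly q b)) at_infinity"
proof -
  have "((\<lambda>b. poly [:0, 2:] b / poly q b) \<longlongrightarrow> 0) at_infinity"
    using assms by (intro poly_divide_tendsto_0_at_infinity) auto
  then have "eventually (\<lambda>b. norm (2 * b / poly q b) < 1) at_infinity"
    by (auto dest: tendstoD[of _ 0 _ 1] simp: dist_norm mult.commute)
  moreover have "eventually (\<lambda>b. poly q b \<noteq> 0) at_infinity"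
    using filterlim_poly_at_infinity[of q] assms
    by (auto simp: filterlim_at_infinity_imp_eventually_ne)
  ultimately show ?thesis
    by eventually_elim (simp add: norm_divide norm_mult)
qed

lemma norm_poly_le_lead_plus_lower:
  fixes q :: "'a::real_normed_field poly"
  assumes "1 \<le> norm b"
  shows "norm (poly q b) \<le> norm (lead_coeff q) * norm b ^ degree q
    + (\<Sum>j<degree q. norm (coeff q j)) * norm b ^ (degree q - 1)"
proof -
  have "norm (\<Sum>j<degree q. coeff q j * b ^ j * 1)
      \<le> (\<Sum>j<degree q. norm (coeff q j)) * 1 * norm b ^ (degree q - 1)"
    by (rule norm_sum_lower_powers_le[OF assms]) simp
  then show ?thesis
    unfolding poly_eq_lead_plus_lower[of q]
    by (intro order_trans[OF norm_triangle_ineq]) (simp add: norm_mult norm_power)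
qed

lemma norm_poly_dilation_diff_ge:
  fixes q :: "'a::real_normed_field poly"
  defines "K \<equiv> real (degree q) * 2 ^ degree q"
  assumes "2 \<le> degree q" "1 \<le> norm b" "norm \<eta> \<le> 1" "K * norm \<eta> \<le> 1 / 2"
  shows "3 / 2 * norm \<eta> * (norm (lead_coeff q) * norm b ^ degree q)
      - (\<Sum>j<degree q. norm (coeff q j)) * (K * norm \<eta>) * norm b ^ (degree q - 1)
    \<le> norm (poly q (b * (1 + \<eta>)) - poly q b)"
proof -
  define n where "n = degree q"
  define a where "a = lead_coeff q"
  have split: "poly q (b * (1 + \<eta>)) - poly q b
      = a * b ^ n * ((1 + \<eta>) ^ n - 1) + (\<Sum>j<n. coeff q j * b ^ j * ((1 + \<eta>) ^ j - 1))"
    unfolding poly_eq_lead_plus_lower[of q] power_mult_distrib a_def n_def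
    by (simp add: algebra_simps sum_subtractf)
  have "3 / 2 * norm \<eta> * (norm a * norm b ^ n) \<le> norm (a * b ^ n * ((1 + \<eta>) ^ n - 1))"
  proof -
    have "3 / 2 * norm \<eta> \<le> norm ((1 + \<eta>) ^ n - 1)"
      using norm_one_plus_power_sub_one_ge[of n \<eta>] assms by (simp add: K_def n_def mult_ac)
    then have "3 / 2 * norm \<eta> * (norm a * norm b ^ n)
        \<le> norm ((1 + \<eta>) ^ n - 1) * (norm a * norm b ^ n)"
      by (rule mult_right_mono) simp
    then show ?thesis
      by (simp add: norm_mult norm_power mult_ac)
  qed
  moreover have "norm (\<Sum>j<n. coeff q j * b ^ j * ((1 + \<eta>) ^ j - 1))
      \<le> (\<Sum>j<n. norm (coeff q j)) * (K * norm \<eta>) * norm b ^ (n - 1)"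
  proof (rule norm_sum_lower_powers_le[OF \<open>1 \<le> norm b\<close>])
    fix j assume "j < n"
    then have "real j * 2 ^ j \<le> K"
      by (auto simp: K_def n_def intro!: mult_mono power_increasing)
    then show "norm ((1 + \<eta>) ^ j - 1) \<le> K * norm \<eta>"
      using norm_one_plus_power_sub_one_le[OF \<open>norm \<eta> \<le> 1\<close>, of j]
      by (meson mult_right_mono norm_ge_zero order_trans)
  qed
  ultimately show ?thesis
    using norm_diff_ineq[of "a * b ^ n * ((1 + \<eta>) ^ n - 1)"
        "\<Sum>j<n. coeff q j * b ^ j * ((1 + \<eta>) ^ j - 1)"]
    unfolding split a_def n_def by linarith
qed

lemma eventually_poly_relative_expansion:
  fixes q :: "'a::real_normed_field poly"
  assumes "2 \<le> degree q"
  obtains \<eta>0 where "0 < \<eta>0"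
    "eventually (\<lambda>b. \<forall>\<eta>. norm \<eta> \<le> \<eta>0 \<longrightarrow>
        norm \<eta> * norm (poly q b) \<le> norm (poly q (b * (1 + \<eta>)) - poly q b)) at_infinity"
proof
  define n where "n = degree q"
  define a where "a = norm (lead_coeff q)"
  define C where "C = (\<Sum>j<n. norm (coeff q j))"
  define K where "K = real n * 2 ^ n"
  have "0 < K" "0 \<le> C" "0 < a"
    using assms by (auto simp: K_def C_def a_def n_def intro: sum_nonneg)
  show "0 < min 1 (1 / (2 * K))"
    using \<open>0 < K\<close> by simp
  show "eventually (\<lambda>b. \<forall>\<eta>. norm \<eta> \<le> min 1 (1 / (2 * K)) \<longrightarrow>
      norm \<eta> * norm (poly q b) \<le> norm (poly q (b * (1 + \<eta>)) - poly q b)) at_infinity"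
  proof (intro eventually_at_infinityI[of "max 1 (2 * C * (K + 1) / a)"] allI impI)
    fix b \<eta> :: 'a
    assume b: "max 1 (2 * C * (K + 1) / a) \<le> norm b" and \<eta>: "norm \<eta> \<le> min 1 (1 / (2 * K))"
    define P where "P = norm b ^ (n - 1)"
    have "1 \<le> norm b" "2 * C * (K + 1) \<le> a * norm b"
      using b \<open>0 < a\<close> by (simp_all add: pos_divide_le_eq mult.commute)
    have "norm \<eta> \<le> 1" "K * norm \<eta> \<le> 1 / 2"
      using \<eta> \<open>0 < K\<close> by (simp_all add: pos_le_divide_eq mult_ac)
    have "0 \<le> P" and "norm b ^ n = norm b * P"
      using assms by (simp_all add: P_def n_def power_Suc[symmetric])
    then have "norm (poly q b) \<le> a * norm b * P + C * P"
      and "3 / 2 * norm \<eta> * (a * norm b * P) - C * (K * norm \<eta>) * P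
        \<le> norm (poly q (b * (1 + \<eta>)) - poly q b)"
      using norm_poly_le_lead_plus_lower[OF \<open>1 \<le> norm b\<close>, of q]
        norm_poly_dilation_diff_ge[OF assms \<open>1 \<le> norm b\<close> \<open>norm \<eta> \<le> 1\<close>] \<open>K * norm \<eta> \<le> 1 / 2\<close>
      by (simp_all add: a_def C_def K_def P_def n_def mult_ac)
    moreover have "norm \<eta> * P * (2 * C * (K + 1)) \<le> norm \<eta> * P * (a * norm b)"
      using \<open>2 * C * (K + 1) \<le> a * norm b\<close> \<open>0 \<le> P\<close> by (intro mult_left_mono) auto
    ultimately show "norm \<eta> * norm (poly q b) \<le> norm (poly q (b * (1 + \<eta>)) - poly q b)"
      using mult_left_mono[of "norm (poly q b)" "a * norm b * P + C * P" "norm \<eta>"]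
      by (simp add: algebra_simps)
  qed
qed

lemma poly_expanding_near_infinity:
  fixes q :: "'a::real_normed_field poly"
  assumes "2 \<le> degree q"
  obtains R \<eta>0 where "0 < R" "0 < \<eta>0"
    "\<And>w. R \<le> norm w \<Longrightarrow> 2 * norm w \<le> norm (poly q w)"
    "\<And>w \<eta>. R \<le> norm w \<Longrightarrow> norm \<eta> \<le> \<eta>0 \<Longrightarrow>
      norm \<eta> * norm (poly q w) \<le> norm (poly q (w * (1 + \<eta>)) - poly q w)"
proof -
  obtain \<eta>0 where "0 < \<eta>0" and expansion: "eventually (\<lambda>w. \<forall>\<eta>. norm \<eta> \<le> \<eta>0 \<longrightarrow>
      norm \<eta> * norm (poly q w) \<le> norm (poly q (w * (1 + \<eta>)) - poly q w)) at_infinity"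
    using eventually_poly_relative_expansion[OF assms] by blast
  from eventually_conj[OF eventually_norm_poly_ge_twice[OF assms] expansion] obtain b where
    "\<forall>w. b \<le> norm w \<longrightarrow> 2 * norm w \<le> norm (poly q w) \<and> (\<forall>\<eta>. norm \<eta> \<le> \<eta>0 \<longrightarrow>
       norm \<eta> * norm (poly q w) \<le> norm (poly q (w * (1 + \<eta>)) - poly q w))"
    unfolding eventually_at_infinity by blast
  then show ?thesis
    using that[of "max b 1" \<eta>0] \<open>0 < \<eta>0\<close> by auto
qed

section \<open>Escaping orbits\<close>

lemma orbit_eq_if_ratio_tendsto_one:
  fixes f :: "'a::real_normed_field \<Rightarrow> 'a"
  assumes "0 < R"
    and escape: "\<And>w. R \<le> norm w \<Longrightarrow> 2 * norm w \<le> norm (f w)"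
    and expand: "\<And>w \<eta>. R \<le> norm w \<Longrightarrow> norm \<eta> \<le> \<eta>0 \<Longrightarrow>
        norm \<eta> * norm (f w) \<le> norm (f (w * (1 + \<eta>)) - f w)"
    and "R \<le> norm b"
    and close: "\<And>k. norm ((f ^^ k) a / (f ^^ k) b - 1) \<le> \<eta>0"
    and lim: "(\<lambda>k. (f ^^ k) a / (f ^^ k) b) \<longlonglongrightarrow> 1"
  shows "a = b"
proof -
  define \<eta> where "\<eta> k = (f ^^ k) a / (f ^^ k) b - 1" for k
  have large: "R \<le> norm ((f ^^ k) b)" for k
  proof (induction k)
    case (Suc k)
    then show ?case
      using escape[OF Suc] \<open>0 < R\<close> by simp
  qed (use \<open>R \<le> norm b\<close> in simp)
  then have nonzero: "(f ^^ k) b \<noteq> 0" for k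
    using \<open>0 < R\<close> by (metis norm_zero not_le)
  \<comment> \<open>the expansion of \<open>f\<close> never lets the relative error \<open>\<eta> k\<close> shrink\<close>
  have "norm (\<eta> k) \<le> norm (\<eta> (Suc k))" for k
  proof -
    have "(f ^^ k) a = (f ^^ k) b * (1 + \<eta> k)"
      using nonzero[of k] by (simp add: \<eta>_def)
    then have "f ((f ^^ k) b * (1 + \<eta> k)) - f ((f ^^ k) b) = \<eta> (Suc k) * f ((f ^^ k) b)"
      using nonzero[of "Suc k"] by (simp add: \<eta>_def field_simps)
    then have "norm (\<eta> k) * norm (f ((f ^^ k) b)) \<le> norm (\<eta> (Suc k)) * norm (f ((f ^^ k) b))"
      using expand[OF large[of k] close[of k, folded \<eta>_def]] by (simp add: norm_mult)
    then show ?thesis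
      using nonzero[of "Suc k"] by simp
  qed
  then have "norm (\<eta> 0) \<le> norm (\<eta> k)" for k
    by (rule lift_Suc_mono_le) simp
  moreover have "(\<lambda>k. norm (\<eta> k)) \<longlonglongrightarrow> 0"
    using tendsto_norm[OF tendsto_diff[OF lim tendsto_const[of 1]]] by (simp add: \<eta>_def)
  ultimately have "norm (\<eta> 0) \<le> 0"
    by (intro LIMSEQ_le_const) auto
  then show "a = b"
    using nonzero[of 0] by (simp add: \<eta>_def)
qed

lemma orbit_tendsto_infinity:
  fixes f :: "'a::real_normed_vector \<Rightarrow> 'a"
  assumes "0 < R" and escape: "\<And>w. R \<le> norm w \<Longrightarrow> 2 * norm w \<le> norm (f w)"
    and "R \<le> norm w"
  shows "filterlim (\<lambda>n. (f ^^ n) w) at_infinity sequentially"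
proof -
  have "R + R * real n \<le> norm ((f ^^ n) w)" for n
  proof (induction n)
    case (Suc n)
    have "0 \<le> R * real n"
      using \<open>0 < R\<close> by simp
    then have "2 * norm ((f ^^ n) w) \<le> norm ((f ^^ Suc n) w)"
      using escape[of "(f ^^ n) w"] Suc by simp
    then show ?case
      using Suc \<open>0 \<le> R * real n\<close> by (simp add: distrib_left)
  qed (use \<open>R \<le> norm w\<close> in simp)
  moreover have "filterlim (\<lambda>n. R + R * real n) at_top sequentially"
    using \<open>0 < R\<close> by (intro filterlim_tendsto_add_at_top[OF tendsto_const]
        filterlim_tendsto_pos_mult_at_top[OF tendsto_const] filterlim_real_sequentially)
  ultimately show ?thesis
    unfolding filterlim_at_infinity_conv_norm_at_top
    by (auto intro: filterlim_at_top_mono)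
qed

lemma normal_family_on_orbit_tendsto_infinity:
  fixes f :: "complex \<Rightarrow> complex"
  assumes normal: "normal_family_on (\<lambda>n. f ^^ n) U" and "v \<in> U" "w \<in> U"
    and escape: "filterlim (\<lambda>n. (f ^^ n) v) at_infinity sequentially"
  shows "filterlim (\<lambda>n. (f ^^ n) w) at_infinity sequentially"
proof (rule ccontr)
  assume "\<not> ?thesis"
  then obtain B where "\<not> eventually (\<lambda>n. B \<le> norm ((f ^^ n) w)) sequentially"
    unfolding filterlim_at_infinity_conv_norm_at_top filterlim_at_top by blast
  then have "infinite {n. norm ((f ^^ n) w) < B}"
    by (simp add: not_eventually not_le frequently_cofinite[symmetric] cofinite_eq_sequentially)
  then obtain r :: "nat \<Rightarrow> nat" where "strict_mono r" and r: "\<And>n. norm ((f ^^ r n) w) < B"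
    using infinite_enumerate by blast
  from normal[unfolded normal_family_on_def, rule_format, of r] obtain s where "strict_mono s" and
    limit_cases: "(\<exists>g. \<forall>K. compact K \<and> K \<subseteq> U \<longrightarrow> uniform_limit K (\<lambda>k. f ^^ r (s k)) g sequentially)
      \<or> (\<forall>K. compact K \<and> K \<subseteq> U \<longrightarrow>
           (\<forall>B. eventually (\<lambda>k. \<forall>z\<in>K. B \<le> norm ((f ^^ r (s k)) z)) sequentially))"
    by blast
  have K: "compact {v, w}" "{v, w} \<subseteq> U"
    using \<open>v \<in> U\<close> \<open>w \<in> U\<close> by auto
  from limit_cases show False
  proof
    assume "\<exists>g. \<forall>K. compact K \<and> K \<subseteq> U \<longrightarrow> uniform_limit K (\<lambda>k. f ^^ r (s k)) g sequentially"
    then obtain g where "uniform_limit {v, w} (\<lambda>k. f ^^ r (s k)) g sequentially"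
      using K by blast
    then have "(\<lambda>k. (f ^^ r (s k)) v) \<longlonglongrightarrow> g v"
      by (rule tendsto_uniform_limitI) simp
    moreover have "filterlim (\<lambda>k. (f ^^ r (s k)) v) at_infinity sequentially"
      using filterlim_compose[OF escape
          filterlim_subseq[OF strict_mono_o[OF \<open>strict_mono r\<close> \<open>strict_mono s\<close>]]]
      by (simp add: comp_def)
    ultimately show False
      by (rule not_tendsto_and_filterlim_at_infinity[rotated]) simp
  next
    assume "\<forall>K. compact K \<and> K \<subseteq> U \<longrightarrow>
      (\<forall>B. eventually (\<lambda>k. \<forall>z\<in>K. B \<le> norm ((f ^^ r (s k)) z)) sequentially)"
    then have "eventually (\<lambda>k. \<forall>z\<in>{v, w}. B \<le> norm ((f ^^ r (s k)) z)) sequentially"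
      using K by blast
    then have "eventually (\<lambda>k. B \<le> norm ((f ^^ r (s k)) w)) sequentially"
      by (rule eventually_mono) simp
    then obtain k where "B \<le> norm ((f ^^ r (s k)) w)"
      using eventually_sequentially by auto
    then show False
      using r[of "s k"] by simp
  qed
qed

lemma fatou_component_infty_orbit_tendsto_infinity:
  fixes f :: "complex \<Rightarrow> complex"
  assumes "0 < R" and escape: "\<And>w. R \<le> norm w \<Longrightarrow> 2 * norm w \<le> norm (f w)"
    and "w \<in> fatou_component_infty f"
  shows "filterlim (\<lambda>n. (f ^^ n) w) at_infinity sequentially"
proof -
  define C where "C = connected_component_set (fatou_set f) w"
  from assms(3) obtain R' where "w \<in> fatou_set f" and far_in_C: "\<And>v. R' < norm v \<Longrightarrow> v \<in> C"
    unfolding fatou_component_infty_def C_def by blast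
  define v :: complex where "v = of_real (max R R' + 1)"
  have "v \<in> C" "R \<le> norm v"
    using far_in_C[of v] \<open>0 < R\<close> by (auto simp: v_def)
  show ?thesis
  proof (rule connected_induction_simple[of C v w])
    show "connected C"
      unfolding C_def by (rule connected_connected_component)
    show "w \<in> C"
      unfolding C_def using \<open>w \<in> fatou_set f\<close> by simp
    show "filterlim (\<lambda>n. (f ^^ n) v) at_infinity sequentially"
      by (rule orbit_tendsto_infinity[OF \<open>0 < R\<close> escape \<open>R \<le> norm v\<close>])
  next
    fix a assume "a \<in> C"
    then have "a \<in> fatou_set f"
      using connected_component_subset unfolding C_def by blast
    then obtain U where "open U" "a \<in> U" and normal: "normal_family_on (\<lambda>n. f ^^ n) U"
      unfolding fatou_set_def by blast
    then show "\<exists>T. openin (top_of_set C) T \<and> a \<in> T \<and> (\<forall>x\<in>T. \<forall>y\<in>T.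
        filterlim (\<lambda>n. (f ^^ n) x) at_infinity sequentially \<longrightarrow>
        filterlim (\<lambda>n. (f ^^ n) y) at_infinity sequentially)"
      using \<open>a \<in> C\<close> normal_family_on_orbit_tendsto_infinity[OF normal]
      by (intro exI[of _ "C \<inter> U"]) (auto intro: openin_open_Int)
  qed (use \<open>v \<in> C\<close> in auto)
qed

lemma fatou_component_infty_poly_orbit_tendsto_infinity:
  fixes q :: "complex poly"
  assumes "2 \<le> degree q" "w \<in> fatou_component_infty (poly q)"
  shows "filterlim (\<lambda>n. (poly q ^^ n) w) at_infinity sequentially"
proof -
  obtain R where "\<forall>w. R \<le> norm w \<longrightarrow> 2 * norm w \<le> norm (poly q w)"
    using eventually_norm_poly_ge_twice[OF assms(1)] unfolding eventually_at_infinity by blast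
  then show ?thesis
    using assms(2) by (intro fatou_component_infty_orbit_tendsto_infinity[of "max R 1"]) auto
qed

section \<open>Sectors and rays\<close>

definition sector :: "real \<Rightarrow> real \<Rightarrow> complex set" where
  "sector \<alpha> r = {z. z \<noteq> 0 \<and> \<bar>Arg z\<bar> \<le> \<alpha> \<and> r \<le> norm z}"

lemma abs_Arg_le_abs_Im_div_Re: "0 < Re z \<Longrightarrow> \<bar>Arg z\<bar> \<le> \<bar>Im z\<bar> / Re z"
  using abs_arctan_le[of "Im z / Re z"] by (simp add: arg_conv_arctan abs_divide)

lemma sector_contains_far_right:
  assumes "0 < \<alpha>"
  obtains x0 where "\<And>z. x0 \<le> Re z \<Longrightarrow> \<bar>Im z\<bar> \<le> L \<Longrightarrow> z \<in> sector \<alpha> r"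
proof
  fix z assume Re: "max 1 (max r (L / \<alpha>)) \<le> Re z" and Im: "\<bar>Im z\<bar> \<le> L"
  then have "\<bar>Im z\<bar> / Re z \<le> \<alpha>"
    using \<open>0 < \<alpha>\<close> by (simp add: divide_le_eq pos_divide_le_eq mult.commute)
  then show "z \<in> sector \<alpha> r"
    using Re abs_Arg_le_abs_Im_div_Re[of z] complex_Re_le_cmod[of z]
    by (auto simp: sector_def)
qed

lemma of_real_in_sector: "0 \<le> \<alpha> \<Longrightarrow> 0 < x \<Longrightarrow> r \<le> x \<Longrightarrow> of_real x \<in> sector \<alpha> r"
  by (simp add: sector_def)

lemma of_real_mult_in_sector:
  "z \<in> sector \<alpha> r \<Longrightarrow> 0 < s \<Longrightarrow> of_real s * z \<in> sector \<alpha> (s * r)"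
  by (simp add: sector_def norm_mult)

lemma sector_mono: "r \<le> r' \<Longrightarrow> sector \<alpha> r' \<subseteq> sector \<alpha> r"
  by (auto simp: sector_def)

lemma Ln_of_real_mult_cis:
  assumes "0 < r" "\<bar>\<theta>\<bar> < pi"
  shows "Ln (of_real r * cis \<theta>) = of_real (ln r) + \<i> * of_real \<theta>"
proof -
  have "Ln (cis \<theta>) = \<i> * of_real \<theta>"
    unfolding cis_conv_exp using assms(2) by (intro Ln_exp) auto
  then show ?thesis
    using Ln_times_of_real[OF \<open>0 < r\<close>, of "cis \<theta>"] Ln_of_real[OF \<open>0 < r\<close>] by simp
qed

lemma exp_scaled_tendsto_one_imp_zero:
  fixes K :: complex
  assumes lim: "((\<lambda>r. exp (of_real r * K)) \<longlongrightarrow> 1) at_top"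
  shows "K = 0"
proof (rule ccontr)
  assume "K \<noteq> 0"
  have "exp (of_real s * K) = 1" for s
  proof -
    have "((\<lambda>r. exp (of_real (s + r) * K)) \<longlongrightarrow> 1) at_top"
      using filterlim_tendsto_add_at_top[OF tendsto_const filterlim_ident]
      by (rule filterlim_compose[OF lim])
    moreover have "((\<lambda>r. exp (of_real (s + r) * K)) \<longlongrightarrow> 1 * exp (of_real s * K)) at_top"
    proof -
      have "exp (of_real (s + r) * K) = exp (of_real r * K) * exp (of_real s * K)" for r
        by (simp add: distrib_right exp_add)
      then show ?thesis
        using tendsto_mult[OF lim tendsto_const[of "exp (of_real s * K)"]] by simp
    qed
    ultimately show ?thesis
      using tendsto_unique[OF trivial_limit_at_top_linorder] by fastforce
  qed
  then obtain n :: int where n: "Im (of_real (pi / norm K) * K) = of_int (2 * n) * pi"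
    unfolding exp_eq_1 by blast
  have "norm (of_real (pi / norm K) * K) = pi"
    using \<open>K \<noteq> 0\<close> by (simp add: norm_mult norm_divide)
  moreover have "Re (of_real (pi / norm K) * K) = 0"
    using \<open>exp (of_real (pi / norm K) * K) = 1\<close> unfolding exp_eq_1 by blast
  ultimately have "\<bar>of_int (2 * n) * pi\<bar> = pi"
    using n cmod_eq_Im by metis
  then have "real_of_int \<bar>2 * n\<bar> = 1"
    by (metis abs_mult abs_of_pos mult_cancel_right2 of_int_abs pi_gt_zero pi_neq_zero)
  then have "\<bar>2 * n\<bar> = 1"
    by linarith
  then show False
    by presburger
qed

lemma exists_pos_real_in_angular_region:
  fixes \<Phi> :: "complex \<Rightarrow> complex"
  assumes "(\<Phi> has_field_derivative 1) (at 0)" "\<Phi> 0 = 0" "0 < \<beta>"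
  obtains y where "0 < y" "\<Phi> (of_real y) \<in> angular_region \<beta>"
proof -
  have lim: "((\<lambda>z. \<Phi> z / z) \<longlongrightarrow> 1) (at 0)"
    using assms(1,2) by (simp add: has_field_derivative_iff)
  have "eventually (\<lambda>z. \<bar>Arg (\<Phi> z / z)\<bar> < \<beta> \<and> \<Phi> z / z \<noteq> 0) (at 0)"
  proof (rule eventually_conj)
    have "((\<lambda>z. Arg (\<Phi> z / z)) \<longlongrightarrow> Arg 1) (at 0)"
      by (rule tendsto_Arg[OF lim]) simp
    then have "eventually (\<lambda>z. dist (Arg (\<Phi> z / z)) (Arg 1) < \<beta>) (at 0)"
      using \<open>0 < \<beta>\<close> by (rule tendstoD)
    then show "eventually (\<lambda>z. \<bar>Arg (\<Phi> z / z)\<bar> < \<beta>) (at 0)"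
      by (simp add: dist_norm)
    show "eventually (\<lambda>z. \<Phi> z / z \<noteq> 0) (at 0)"
      by (rule tendsto_imp_eventually_ne[OF lim]) simp
  qed
  then obtain r where "0 < r"
    and r: "\<And>z. z \<noteq> 0 \<Longrightarrow> dist z 0 < r \<Longrightarrow> \<bar>Arg (\<Phi> z / z)\<bar> < \<beta> \<and> \<Phi> z / z \<noteq> 0"
    unfolding eventually_at by blast
  define y where "y = r / 2"
  define w where "w = \<Phi> (of_real y) / of_real y"
  have "0 < y" "dist (complex_of_real y) 0 < r"
    using \<open>0 < r\<close> by (simp_all add: y_def)
  then have "\<bar>Arg w\<bar> < \<beta>" "w \<noteq> 0"
    using r[of "of_real y"] by (simp_all add: w_def)
  moreover have "\<Phi> (of_real y) = w * of_real y"
    using \<open>0 < y\<close> by (simp add: w_def)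
  ultimately have "\<Phi> (of_real y) \<in> angular_region \<beta>"
    using \<open>0 < y\<close> by (simp add: angular_region_def)
  then show ?thesis
    using that \<open>0 < y\<close> by blast
qed

section \<open>Exponential asymptotics and semiconjugacy to a polynomial\<close>

locale exp_asymptotic_semiconjugacy =
  fixes q :: "complex poly" and d :: nat and Q :: "complex \<Rightarrow> complex"
    and A c :: complex and \<alpha> R :: real
  assumes degree_q: "2 \<le> degree q" and d: "2 \<le> d"
    and holomorphic_Q: "Q holomorphic_on - \<real>\<^sub>\<le>\<^sub>0"
    and semiconj: "\<And>u. u \<noteq> 0 \<Longrightarrow> Q (of_nat d * u) = poly q (Q u)"
    and asymptotic: "\<And>u. u \<in> sector \<alpha> R \<Longrightarrow> \<exists>\<epsilon>. Q u = A * exp (c * u + \<epsilon>) \<and> norm \<epsilon> \<le> 1 / norm u"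
    and A: "A \<noteq> 0" and \<alpha>: "0 < \<alpha>"
begin

lemma semiconj_iterate: "u \<noteq> 0 \<Longrightarrow> Q (of_nat (d ^ k) * u) = (poly q ^^ k) (Q u)"
proof (induction k)
  case (Suc k)
  have "Q (of_nat (d ^ Suc k) * u) = Q (of_nat d * (of_nat (d ^ k) * u))"
    by (simp add: mult.assoc)
  also have "\<dots> = poly q (Q (of_nat (d ^ k) * u))"
    using Suc.prems d by (intro semiconj) simp
  finally show ?case
    using Suc by simp
qed simp

lemma Re_c_pos_if_escaping:
  assumes "0 < t"
    and escape: "filterlim (\<lambda>n. (poly q ^^ n) (Q (of_real t))) at_infinity sequentially"
  shows "0 < Re c"
proof (rule ccontr)
  assume "\<not> 0 < Re c"
  have bounded: "norm (Q (of_real x)) \<le> norm A * exp 1" if x_large: "max R 1 \<le> x" for x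
  proof -
    obtain \<epsilon> where \<epsilon>: "Q (of_real x) = A * exp (c * of_real x + \<epsilon>)" "norm \<epsilon> \<le> 1 / x"
      using asymptotic[OF of_real_in_sector, of x] x_large \<alpha> by fastforce
    have "1 / x \<le> 1"
      using x_large by simp
    then have "Re \<epsilon> \<le> 1"
      using \<epsilon>(2) complex_Re_le_cmod[of \<epsilon>] by linarith
    moreover have "Re c * x \<le> 0"
      using \<open>\<not> 0 < Re c\<close> x_large by (simp add: mult_nonpos_nonneg)
    ultimately show ?thesis
      unfolding \<epsilon>(1) using A by (simp add: norm_mult)
  qed
  have "filterlim (\<lambda>n. real (d ^ n) * t) at_top sequentially"
  proof (rule filterlim_at_top_mono)
    show "filterlim (\<lambda>n. t * real n) at_top sequentially"
      using \<open>0 < t\<close>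
      by (intro filterlim_tendsto_pos_mult_at_top[OF tendsto_const] filterlim_real_sequentially)
    have "real n \<le> real (d ^ n)" for n
      using less_exp[of n] power_mono[of 2 d n] d by linarith
    then show "eventually (\<lambda>n. t * real n \<le> real (d ^ n) * t) sequentially"
      using \<open>0 < t\<close> by (simp add: mult.commute)
  qed
  then have "eventually (\<lambda>n. max R 1 \<le> real (d ^ n) * t) sequentially"
    unfolding filterlim_at_top by blast
  then have "eventually (\<lambda>n. norm ((poly q ^^ n) (Q (of_real t))) \<le> norm A * exp 1) sequentially"
  proof eventually_elim
    case (elim n)
    then show ?case
      using bounded[OF elim] semiconj_iterate[of "of_real t" n] \<open>0 < t\<close> by simp
  qed
  moreover have
    "eventually (\<lambda>n. norm A * exp 1 + 1 \<le> norm ((poly q ^^ n) (Q (of_real t)))) sequentially"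
    using escape unfolding filterlim_at_infinity_conv_norm_at_top filterlim_at_top by blast
  ultimately have "eventually (\<lambda>n. False) sequentially"
    by eventually_elim simp
  then show False
    by simp
qed

lemma Q_nonzero: "u \<in> sector \<alpha> R \<Longrightarrow> Q u \<noteq> 0"
  using asymptotic A by fastforce

definition period :: complex where
  "period = 2 * pi * \<i> / c"

context
  assumes Re_c: "0 < Re c"
begin

lemma c_times_period: "c * period = 2 * pi * \<i>"
  using Re_c by (auto simp: period_def)

lemma exp_c_period_shift: "exp (c * (u + of_int n * period)) = exp (c * u)"
proof -
  have "c * (u + of_int n * period) = c * u + 2 * of_int n * pi * \<i>"
    using c_times_period by (simp add: algebra_simps)
  then show ?thesis
    using exp_integer_2pi[of "of_int n"] by (simp add: exp_add)
qed

lemma Re_c_period_shift: "Re (c * (u + of_real s * period)) = Re (c * u)"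
proof -
  have "c * (u + of_real s * period) = c * u + of_real (2 * pi * s) * \<i>"
    using c_times_period by (simp add: algebra_simps)
  then show ?thesis
    by simp
qed

lemma Im_period_pos: "0 < Im period"
proof -
  have "Im period = 2 * pi * Re c / (norm c)\<^sup>2"
    by (simp add: period_def Im_divide cmod_power2)
  then show ?thesis
    using Re_c by (auto intro!: divide_pos_pos)
qed

lemma Q_eq_shift_mult_exp:
  assumes "u \<in> sector \<alpha> m" "u + of_int n * period \<in> sector \<alpha> m" "R \<le> m" "0 < m"
  shows "\<exists>\<delta>. Q u = Q (u + of_int n * period) * exp \<delta> \<and> norm \<delta> \<le> 2 / m"
proof -
  have "u \<in> sector \<alpha> R" "u + of_int n * period \<in> sector \<alpha> R"
    using assms(1-3) sector_mono by blast+
  then obtain \<epsilon>1 \<epsilon>2 where \<epsilon>1: "Q u = A * exp (c * u + \<epsilon>1)" "norm \<epsilon>1 \<le> 1 / norm u"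
    and \<epsilon>2: "Q (u + of_int n * period) = A * exp (c * (u + of_int n * period) + \<epsilon>2)"
      "norm \<epsilon>2 \<le> 1 / norm (u + of_int n * period)"
    using asymptotic by blast
  have "Q u = Q (u + of_int n * period) * exp (\<epsilon>1 - \<epsilon>2)"
    unfolding \<epsilon>1 \<epsilon>2 exp_add exp_c_period_shift by (simp add: exp_diff)
  moreover have "1 / norm u \<le> 1 / m" "1 / norm (u + of_int n * period) \<le> 1 / m"
    using assms(1,2,4) by (auto simp: sector_def intro!: frac_le)
  then have "norm (\<epsilon>1 - \<epsilon>2) \<le> 2 / m"
    using norm_triangle_ineq4[of \<epsilon>1 \<epsilon>2] \<epsilon>1(2) \<epsilon>2(2) by simp
  ultimately show ?thesis
    by blast
qed

lemma norm_Q_lower_bound: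
  assumes "u \<in> sector \<alpha> (max R 1)"
  shows "norm A * exp (Re (c * u) - 1) \<le> norm (Q u)"
proof -
  have "u \<in> sector \<alpha> R" "1 \<le> norm u"
    using assms sector_mono[of R "max R 1"] by (auto simp: sector_def)
  then obtain \<epsilon> where \<epsilon>: "Q u = A * exp (c * u + \<epsilon>)" "norm \<epsilon> \<le> 1 / norm u"
    using asymptotic by blast
  have "1 / norm u \<le> 1"
    using \<open>1 \<le> norm u\<close> by (simp add: divide_le_eq)
  then have "- 1 \<le> Re \<epsilon>"
    using \<epsilon>(2) abs_Re_le_cmod[of \<epsilon>] by linarith
  then show ?thesis
    unfolding \<epsilon>(1) by (simp add: norm_mult mult_left_mono)
qed

lemma orbit_ratio_bound:
  assumes u: "u \<in> sector \<alpha> m" "u + period \<in> sector \<alpha> m" and "max R 4 \<le> m"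
  shows "norm ((poly q ^^ k) (Q u) / (poly q ^^ k) (Q (u + period)) - 1) \<le> 3 / m * (1 / real d) ^ k"
proof -
  define s where "s = real (d ^ k)"
  have "1 \<le> s"
    using d by (simp add: s_def)
  then have "m \<le> s * m"
    using mult_right_mono[of 1 s m] \<open>max R 4 \<le> m\<close> by simp
  have scaled: "of_real s * u \<in> sector \<alpha> (s * m)"
    "of_real s * u + of_int (int (d ^ k)) * period \<in> sector \<alpha> (s * m)"
    using of_real_mult_in_sector[OF u(1), of s] of_real_mult_in_sector[OF u(2), of s] \<open>1 \<le> s\<close> d
    by (simp_all add: s_def distrib_left)
  have "4 \<le> s * m"
    using \<open>m \<le> s * m\<close> \<open>max R 4 \<le> m\<close> by (metis max.bounded_iff order_trans)
  obtain \<delta> where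
    \<delta>: "Q (of_real s * u) = Q (of_real s * (u + period)) * exp \<delta>" "norm \<delta> \<le> 2 / (s * m)"
    using Q_eq_shift_mult_exp[OF scaled] \<open>m \<le> s * m\<close> \<open>4 \<le> s * m\<close> \<open>max R 4 \<le> m\<close>
    by (auto simp: s_def distrib_left)
  moreover have "2 / (s * m) \<le> 1 / 2"
    using \<open>4 \<le> s * m\<close> by (simp add: pos_divide_le_eq)
  ultimately have "norm (exp \<delta> - 1) \<le> 3 / 2 * norm \<delta>"
    by (intro norm_exp_bounds) linarith
  moreover have "(poly q ^^ k) (Q u) / (poly q ^^ k) (Q (u + period)) = exp \<delta>"
  proof -
    have "u \<noteq> 0" "u + period \<noteq> 0"
      using u by (auto simp: sector_def)
    then have "(poly q ^^ k) (Q u) = Q (of_real s * u)"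
      "(poly q ^^ k) (Q (u + period)) = Q (of_real s * (u + period))"
      by (simp_all add: semiconj_iterate[symmetric] s_def)
    moreover have "Q (of_real s * (u + period)) \<noteq> 0"
      using scaled(2) sector_mono[of R "s * m"] \<open>m \<le> s * m\<close> \<open>max R 4 \<le> m\<close>
      by (intro Q_nonzero) (auto simp: s_def distrib_left)
    ultimately show ?thesis
      using \<delta>(1) by simp
  qed
  moreover have "3 / 2 * norm \<delta> \<le> 3 / m * (1 / real d) ^ k"
    using \<delta>(2) by (simp add: s_def power_one_over field_simps)
  ultimately show ?thesis
    by simp
qed

text \<open>The orbits of \<open>Q u\<close> and \<open>Q (u + period)\<close> under \<open>q\<close> are those of \<open>Q (d ^ k * u)\<close> and
  \<open>Q (d ^ k * (u + period))\<close>, whose leading exponentials agree because \<open>c * d ^ k * period\<close> is a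
  multiple of \<open>2 * pi * \<i>\<close>; so their ratio tends to \<open>1\<close>, which the expansion of \<open>q\<close> forbids
  unless the orbits coincide.\<close>

lemma Q_period_shift_eq_far_out:
  obtains m K where "\<And>u. u \<in> sector \<alpha> m \<Longrightarrow> u + period \<in> sector \<alpha> m \<Longrightarrow> K \<le> Re (c * u) \<Longrightarrow>
    Q (u + period) = Q u"
proof -
  obtain R0 \<eta>0 where "0 < R0" "0 < \<eta>0"
    and escape: "\<And>w. R0 \<le> norm w \<Longrightarrow> 2 * norm w \<le> norm (poly q w)"
    and expand: "\<And>w \<eta>. R0 \<le> norm w \<Longrightarrow> norm \<eta> \<le> \<eta>0 \<Longrightarrow>
      norm \<eta> * norm (poly q w) \<le> norm (poly q (w * (1 + \<eta>)) - poly q w)"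
    using poly_expanding_near_infinity[OF degree_q] by blast
  define m where "m = max (max R 4) (3 / \<eta>0)"
  have "max R 4 \<le> m" "max R 1 \<le> m" "3 / \<eta>0 \<le> m"
    by (auto simp: m_def max_def)
  show ?thesis
  proof (rule that[of m "1 + ln (R0 / norm A)"])
    fix u assume u: "u \<in> sector \<alpha> m" "u + period \<in> sector \<alpha> m"
      and Re_u: "1 + ln (R0 / norm A) \<le> Re (c * u)"
    have "norm A * exp (ln (R0 / norm A)) \<le> norm A * exp (Re (c * (u + of_real 1 * period)) - 1)"
      using Re_u unfolding Re_c_period_shift by (intro mult_left_mono) auto
    also have "\<dots> \<le> norm (Q (u + of_real 1 * period))"
      using u(2) sector_mono[OF \<open>max R 1 \<le> m\<close>] by (intro norm_Q_lower_bound) auto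
    finally have "R0 \<le> norm (Q (u + period))"
      using A \<open>0 < R0\<close> by simp
    moreover have close:
      "norm ((poly q ^^ k) (Q u) / (poly q ^^ k) (Q (u + period)) - 1) \<le> \<eta>0" for k
    proof -
      have "(1 / real d) ^ k \<le> 1"
        using d by (simp add: power_le_one)
      then have "3 / m * (1 / real d) ^ k \<le> 3 / m"
        using \<open>max R 4 \<le> m\<close> by (intro mult_left_le) auto
      also have "\<dots> \<le> \<eta>0"
        using \<open>0 < \<eta>0\<close> \<open>3 / \<eta>0 \<le> m\<close> \<open>max R 4 \<le> m\<close> by (simp add: field_simps)
      finally show ?thesis
        using orbit_ratio_bound[OF u \<open>max R 4 \<le> m\<close>, of k] by linarith
    qed
    moreover have "(\<lambda>k. (poly q ^^ k) (Q u) / (poly q ^^ k) (Q (u + period))) \<longlonglongrightarrow> 1"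
    proof (rule LIM_zero_cancel, rule Lim_null_comparison)
      show "eventually (\<lambda>k. norm ((poly q ^^ k) (Q u) / (poly q ^^ k) (Q (u + period)) - 1)
          \<le> 3 / m * (1 / real d) ^ k) sequentially"
        using orbit_ratio_bound[OF u \<open>max R 4 \<le> m\<close>] by simp
      show "(\<lambda>k. 3 / m * (1 / real d) ^ k) \<longlonglongrightarrow> 0"
        using d by (intro tendsto_mult_right_zero LIMSEQ_realpow_zero) auto
    qed
    ultimately have "Q u = Q (u + period)"
      using orbit_eq_if_ratio_tendsto_one[OF \<open>0 < R0\<close> escape expand] by blast
    then show "Q (u + period) = Q u"
      by simp
  qed
qed

lemma Q_periodic_far_right:
  obtains x0 where "\<And>u. x0 \<le> Re u \<Longrightarrow> \<bar>Im u\<bar> < 1 \<Longrightarrow> Q (u + period) = Q u"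
proof -
  obtain m K where shift_eq: "\<And>u. u \<in> sector \<alpha> m \<Longrightarrow> u + period \<in> sector \<alpha> m \<Longrightarrow>
      K \<le> Re (c * u) \<Longrightarrow> Q (u + period) = Q u"
    using Q_period_shift_eq_far_out by blast
  obtain x1 where in_sector: "\<And>u. x1 \<le> Re u \<Longrightarrow> \<bar>Im u\<bar> \<le> 1 + norm period \<Longrightarrow> u \<in> sector \<alpha> m"
    using sector_contains_far_right[OF \<alpha>] by blast
  define x2 where "x2 = (K + norm c) / Re c"
  show ?thesis
  proof (rule that[of "max x1 x2 + norm period"])
    fix u assume Re_u: "max x1 x2 + norm period \<le> Re u" and Im_u: "\<bar>Im u\<bar> < 1"
    have "u \<in> sector \<alpha> m" "u + period \<in> sector \<alpha> m"
      using Re_u Im_u abs_Re_le_cmod[of period] abs_Im_le_cmod[of period]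
      by (auto intro!: in_sector)
    moreover have "K \<le> Re (c * u)"
    proof -
      have "x2 \<le> Re u"
        using Re_u max.cobounded2[of x2 x1] norm_ge_zero[of period] by linarith
      then have "K + norm c \<le> Re c * Re u"
        using Re_c mult_left_mono[of x2 "Re u" "Re c"] by (simp add: x2_def)
      moreover have "\<bar>Im c\<bar> * \<bar>Im u\<bar> \<le> \<bar>Im c\<bar> * 1"
        using Im_u by (intro mult_left_mono) auto
      then have "Im c * Im u \<le> norm c"
        using abs_Im_le_cmod[of c] abs_ge_self[of "Im c * Im u"] by (simp add: abs_mult)
      ultimately show ?thesis
        by simp
    qed
    ultimately show "Q (u + period) = Q u"
      by (rule shift_eq)
  qed
qed

lemma Q_holomorphic_on_halfplane: "Q holomorphic_on {u. 0 < Re (c * u)}"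
proof (rule holomorphic_on_subset[OF holomorphic_Q])
  show "{u. 0 < Re (c * u)} \<subseteq> - \<real>\<^sub>\<le>\<^sub>0"
    using mult_nonneg_nonpos[of "Re c"] Re_c by (force simp: complex_nonpos_Reals_iff)
qed

lemma Q_periodic:
  assumes "0 < Re (c * u)"
  shows "Q (u + period) = Q u"
proof -
  obtain x0 where far: "\<And>u. x0 \<le> Re u \<Longrightarrow> \<bar>Im u\<bar> < 1 \<Longrightarrow> Q (u + period) = Q u"
    using Q_periodic_far_right by blast
  define H where "H = {u. 0 < Re (c * u)}"
  define S where "S = H \<inter> {u. x0 < Re u \<and> \<bar>Im u\<bar> < 1}"
  have "open H"
    unfolding H_def by (intro open_Collect_less continuous_intros)
  have "(\<lambda>u. u + period) ` H \<subseteq> H"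
    using Re_c_period_shift[of _ 1] by (auto simp: H_def simp del: times_complex.sel)
  then have "Q holomorphic_on (\<lambda>u. u + period) ` H"
    using Q_holomorphic_on_halfplane holomorphic_on_subset unfolding H_def by blast
  show ?thesis
  proof (rule analytic_continuation_open[of S H "\<lambda>u. Q (u + period)" Q u])
    show "open S"
      unfolding S_def using \<open>open H\<close>
      by (intro open_Int open_Collect_conj open_Collect_less continuous_intros)
    have "of_real (max x0 0 + 1) \<in> S"
      using Re_c by (simp add: S_def H_def)
    then show "S \<noteq> {}"
      by blast
    have "H = {u. inner (cnj c) u > 0}"
      by (simp add: H_def inner_complex_def)
    then show "connected H"
      using convex_halfspace_gt convex_connected by metis
    show "(\<lambda>u. Q (u + period)) holomorphic_on H"
      using holomorphic_on_compose[of "\<lambda>u. u + period" H Q] \<open>Q holomorphic_on (\<lambda>u. u + period) ` H\<close>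
      by (simp add: comp_def holomorphic_intros)
  qed (use \<open>open H\<close> far assms Q_holomorphic_on_halfplane in \<open>auto simp: S_def H_def\<close>)
qed

lemma Q_periodic_int:
  assumes "0 < Re (c * u)"
  shows "Q (u + of_int n * period) = Q u"
proof -
  have shift: "0 < Re (c * (u + of_int i * period))" for i
    using Re_c_period_shift[of u "of_int i"] assms by simp
  show ?thesis
  proof (induction n rule: int_induct[where k = 0])
    case (step1 i)
    have "u + of_int (i + 1) * period = (u + of_int i * period) + period"
      by (simp add: algebra_simps)
    then show ?case
      using Q_periodic[OF shift[of i]] step1 by (simp add: add.assoc)
  next
    case (step2 i)
    have "u + of_int i * period = (u + of_int (i - 1) * period) + period"
      by (simp add: algebra_simps)
    then show ?case
      using Q_periodic[OF shift[of "i - 1"]] step2 by (simp add: add.assoc)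
  qed simp
qed

lemma eq_real_plus_real_mult_period:
  "u = of_real (Re (c * u) / Re c) + of_real (Im u / Im period) * period"
proof -
  define V t where "V = Re (c * u) / Re c" and "t = Im u / Im period"
  have "u = of_real V + of_real t * period"
  proof (rule complex_eqI)
    show Im: "Im u = Im (of_real V + of_real t * period)"
      using Im_period_pos by (simp add: t_def)
    have "Re (c * u) = Re (c * (of_real V + of_real t * period))"
      unfolding Re_c_period_shift using Re_c by (simp add: V_def)
    then show "Re u = Re (of_real V + of_real t * period)"
      using Im Re_c by (simp del: Im_complex_of_real Re_complex_of_real)
  qed
  then show ?thesis
    by (simp only: V_def t_def)
qed

text \<open>Subtracting a suitable integer multiple of the period moves any point of the half-plane
  \<open>0 < Re (c * u)\<close> to within \<open>norm period\<close> of the positive real axis, where the asymptotics of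
  \<open>Q\<close> are known.\<close>

lemma Q_asymptotic_halfplane:
  obtains x0 where "0 < x0"
    "\<And>u. x0 \<le> Re (c * u) \<Longrightarrow> \<exists>\<epsilon>. Q u = A * exp (c * u + \<epsilon>) \<and> norm \<epsilon> \<le> 2 * Re c / Re (c * u)"
proof -
  obtain x1 where in_sector: "\<And>u. x1 \<le> Re u \<Longrightarrow> \<bar>Im u\<bar> \<le> norm period \<Longrightarrow> u \<in> sector \<alpha> R"
    using sector_contains_far_right[OF \<alpha>] by blast
  have pos: "0 < Re c * (max x1 0 + 2 * norm period + 1)"
    using Re_c by (simp add: add_nonneg_pos)
  show ?thesis
  proof (rule that[OF pos])
    fix u assume u: "Re c * (max x1 0 + 2 * norm period + 1) \<le> Re (c * u)"
    define V where "V = Re (c * u) / Re c"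
    define t where "t = Im u / Im period"
    have V: "max x1 0 + 2 * norm period + 1 \<le> V"
      using u Re_c by (simp add: V_def pos_le_divide_eq mult.commute)
    define u' where "u' = u - of_int \<lfloor>t\<rfloor> * period"
    have u'_eq: "u' = of_real V + of_real (t - of_int \<lfloor>t\<rfloor>) * period"
      using eq_real_plus_real_mult_period[of u] by (simp add: u'_def V_def t_def algebra_simps)
    have frac_bound: "\<bar>(t - of_int \<lfloor>t\<rfloor>) * x\<bar> \<le> norm period" if "\<bar>x\<bar> \<le> norm period" for x
    proof -
      have "\<bar>t - of_int \<lfloor>t\<rfloor>\<bar> * \<bar>x\<bar> \<le> 1 * norm period"
        using that by (intro mult_mono) linarith+
      then show ?thesis
        by (simp add: abs_mult)
    qed
    have "V - norm period \<le> Re u'"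
      using frac_bound[OF abs_Re_le_cmod] by (simp add: u'_eq)
    moreover have "\<bar>Im u'\<bar> \<le> norm period"
      using frac_bound[OF abs_Im_le_cmod] by (simp add: u'_eq)
    ultimately have "u' \<in> sector \<alpha> R" "V / 2 \<le> norm u'"
      using V in_sector complex_Re_le_cmod[of u'] by auto
    have "u = u' + of_int \<lfloor>t\<rfloor> * period"
      by (simp add: u'_def)
    moreover have "Re (c * u') = Re (c * u)"
      using Re_c_period_shift[of "of_real V" "t - of_int \<lfloor>t\<rfloor>"] Re_c by (simp add: u'_eq V_def)
    moreover have "0 < Re (c * u)"
      using u pos by linarith
    ultimately have "Q u = Q u'" "exp (c * u) = exp (c * u')"
      using Q_periodic_int[of u' "\<lfloor>t\<rfloor>"] exp_c_period_shift[of u' "\<lfloor>t\<rfloor>"] by simp_all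
    obtain \<epsilon> where \<epsilon>: "Q u' = A * exp (c * u' + \<epsilon>)" "norm \<epsilon> \<le> 1 / norm u'"
      using asymptotic[OF \<open>u' \<in> sector \<alpha> R\<close>] by blast
    have "0 < V / 2"
      using V max.cobounded2[of 0 x1] norm_ge_zero[of period] by linarith
    then have "1 / norm u' \<le> 1 / (V / 2)"
      using \<open>V / 2 \<le> norm u'\<close> by (intro frac_le) auto
    also have "\<dots> = 2 * Re c / Re (c * u)"
      by (simp add: V_def)
    finally have "1 / norm u' \<le> 2 * Re c / Re (c * u)" .
    then show "\<exists>\<epsilon>. Q u = A * exp (c * u + \<epsilon>) \<and> norm \<epsilon> \<le> 2 * Re c / Re (c * u)"
      using \<epsilon> \<open>Q u = Q u'\<close> \<open>exp (c * u) = exp (c * u')\<close> by (auto simp: exp_add)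
  qed
qed

lemma Q_ray_asymptotic:
  assumes "0 < Re (c * e)"
  obtains \<epsilon> where "(\<epsilon> \<longlongrightarrow> 0) at_top"
    "eventually (\<lambda>r. Q (of_real r * e) = A * exp (of_real r * (c * e) + \<epsilon> r)) at_top"
proof -
  obtain x0 where "0 < x0" and asym: "\<And>u. x0 \<le> Re (c * u) \<Longrightarrow>
      \<exists>\<epsilon>. Q u = A * exp (c * u + \<epsilon>) \<and> norm \<epsilon> \<le> 2 * Re c / Re (c * u)"
    using Q_asymptotic_halfplane by blast
  have Re_ray: "Re (c * (of_real r * e)) = r * Re (c * e)" for r
    by (simp add: algebra_simps)
  have "\<forall>r. \<exists>\<epsilon>. x0 / Re (c * e) \<le> r \<longrightarrow>
      Q (of_real r * e) = A * exp (of_real r * (c * e) + \<epsilon>)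
      \<and> norm \<epsilon> \<le> 2 * Re c / Re (c * e) * inverse r"
  proof
    fix r
    show "\<exists>\<epsilon>. x0 / Re (c * e) \<le> r \<longrightarrow>
      Q (of_real r * e) = A * exp (of_real r * (c * e) + \<epsilon>)
      \<and> norm \<epsilon> \<le> 2 * Re c / Re (c * e) * inverse r"
    proof (cases "x0 / Re (c * e) \<le> r")
      case True
      then have "0 < r"
        using \<open>0 < x0\<close> assms by (meson divide_pos_pos order_less_le_trans)
      have "x0 \<le> Re (c * (of_real r * e))"
        unfolding Re_ray using True assms by (simp add: pos_divide_le_eq mult.commute)
      then obtain \<epsilon> where "Q (of_real r * e) = A * exp (c * (of_real r * e) + \<epsilon>)"
        "norm \<epsilon> \<le> 2 * Re c / Re (c * (of_real r * e))"
        using asym by blast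
      moreover have "2 * Re c / Re (c * (of_real r * e)) = 2 * Re c / Re (c * e) * inverse r"
        unfolding Re_ray using \<open>0 < r\<close> by (simp add: field_simps)
      ultimately show ?thesis
        by (auto simp: mult.left_commute)
    qed simp
  qed
  from choice[OF this] obtain \<epsilon> where \<epsilon>: "\<forall>r. x0 / Re (c * e) \<le> r \<longrightarrow>
      Q (of_real r * e) = A * exp (of_real r * (c * e) + \<epsilon> r)
      \<and> norm (\<epsilon> r) \<le> 2 * Re c / Re (c * e) * inverse r"
    by blast
  show ?thesis
  proof (rule that)
    show "(\<epsilon> \<longlongrightarrow> 0) at_top"
    proof (rule Lim_null_comparison)
      show "eventually (\<lambda>r. norm (\<epsilon> r) \<le> 2 * Re c / Re (c * e) * inverse r) at_top"
        using \<epsilon> eventually_at_top_linorder by blast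
      show "((\<lambda>r. 2 * Re c / Re (c * e) * inverse r) \<longlongrightarrow> 0) at_top"
        by (intro tendsto_mult_right_zero tendsto_inverse_0_at_top filterlim_ident)
    qed
    show "eventually (\<lambda>r. Q (of_real r * e) = A * exp (of_real r * (c * e) + \<epsilon> r)) at_top"
      using \<epsilon> eventually_at_top_linorder by blast
  qed
qed

lemma Q_agree_on_rays_imp_eq:
  assumes "0 < Re (c * e1)" "0 < Re (c * e2)"
    and agree: "\<And>r. 0 < r \<Longrightarrow> Q (of_real r * e1) = Q (of_real r * e2)"
  shows "c * e1 = c * e2"
proof -
  obtain \<epsilon>1 where lim1: "(\<epsilon>1 \<longlongrightarrow> 0) at_top"
    and eq1: "eventually (\<lambda>r. Q (of_real r * e1) = A * exp (of_real r * (c * e1) + \<epsilon>1 r)) at_top"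
    using Q_ray_asymptotic[OF assms(1)] by blast
  obtain \<epsilon>2 where lim2: "(\<epsilon>2 \<longlongrightarrow> 0) at_top"
    and eq2: "eventually (\<lambda>r. Q (of_real r * e2) = A * exp (of_real r * (c * e2) + \<epsilon>2 r)) at_top"
    using Q_ray_asymptotic[OF assms(2)] by blast
  have "eventually (\<lambda>r::real. 0 < r) at_top"
    by (rule eventually_gt_at_top)
  with eq1 eq2
  have "eventually (\<lambda>r. exp (\<epsilon>2 r - \<epsilon>1 r) = exp (of_real r * (c * e1 - c * e2))) at_top"
  proof eventually_elim
    case (elim r)
    then have "exp (of_real r * (c * e1) + \<epsilon>1 r) = exp (of_real r * (c * e2) + \<epsilon>2 r)"
      using agree[of r] A by simp
    then show ?case
      by (simp add: exp_add exp_diff right_diff_distrib field_simps)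
  qed
  moreover have "((\<lambda>r. exp (\<epsilon>2 r - \<epsilon>1 r)) \<longlongrightarrow> 1) at_top"
    using tendsto_exp[OF tendsto_diff[OF lim2 lim1]] by simp
  ultimately have "((\<lambda>r. exp (of_real r * (c * e1 - c * e2))) \<longlongrightarrow> 1) at_top"
    by (rule Lim_transform_eventually[rotated])
  then have "c * e1 - c * e2 = 0"
    by (rule exp_scaled_tendsto_one_imp_zero)
  then show ?thesis
    by simp
qed

end

lemma rotation_invariant_imp_ge_half:
  assumes "0 < t"
    and escape: "filterlim (\<lambda>n. (poly q ^^ n) (Q (of_real t))) at_infinity sequentially"
    and "0 < \<rho>" and rotation: "\<And>u v. Ln u = Ln v + of_real (2 * pi * \<rho>) * \<i> \<Longrightarrow> Q u = Q v"
  shows "1 / 2 \<le> \<rho>"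
proof (rule ccontr)
  assume "\<not> 1 / 2 \<le> \<rho>"
  have Re_c: "0 < Re c"
    using Re_c_pos_if_escaping[OF \<open>0 < t\<close> escape] .
  define \<psi> where "\<psi> = Arg c"
  have "\<bar>\<psi>\<bar> < pi / 2"
    using Re_c Arg_Re_pos[of c] by (simp add: \<psi>_def)
  have c: "c = of_real (norm c) * cis \<psi>"
    using rcis_cmod_Arg[of c] by (simp add: rcis_def \<psi>_def)
  \<comment> \<open>\<open>c * e1\<close> and \<open>c * e2\<close> have arguments \<open>\<plusminus>pi * \<rho>\<close>, so for \<open>\<rho> < 1 / 2\<close> both rays lie in the
     half-plane \<open>Re (c * u) > 0\<close>, while their arguments differ by \<open>2 * pi * \<rho>\<close>\<close>
  define e1 e2 where "e1 = cis (pi * \<rho> - \<psi>)" and "e2 = cis (- pi * \<rho> - \<psi>)"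
  have c_e: "c * e1 = of_real (norm c) * cis (pi * \<rho>)" "c * e2 = of_real (norm c) * cis (- pi * \<rho>)"
    by (subst c, simp add: e1_def e2_def mult.assoc cis_mult)+
  have "0 < pi * \<rho>" "pi * \<rho> < pi / 2"
    using \<open>0 < \<rho>\<close> \<open>\<not> 1 / 2 \<le> \<rho>\<close> by auto
  then have "0 < cos (pi * \<rho>)" "0 < sin (pi * \<rho>)"
    using pi_gt_zero by (intro cos_gt_zero_pi sin_gt_zero; linarith)+
  have "c \<noteq> 0"
    using Re_c by auto
  have "c * e1 = c * e2"
  proof (rule Q_agree_on_rays_imp_eq[OF Re_c])
    show "0 < Re (c * e1)" "0 < Re (c * e2)"
      using \<open>0 < cos (pi * \<rho>)\<close> \<open>c \<noteq> 0\<close> by (simp_all add: c_e)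
  next
    fix r :: real assume "0 < r"
    have "\<bar>pi * \<rho> - \<psi>\<bar> < pi" "\<bar>- pi * \<rho> - \<psi>\<bar> < pi"
      using \<open>\<bar>\<psi>\<bar> < pi / 2\<close> \<open>0 < pi * \<rho>\<close> \<open>pi * \<rho> < pi / 2\<close> by linarith+
    then have "Ln (of_real r * e1) = Ln (of_real r * e2) + of_real (2 * pi * \<rho>) * \<i>"
      using \<open>0 < r\<close> by (simp add: e1_def e2_def Ln_of_real_mult_cis algebra_simps)
    then show "Q (of_real r * e1) = Q (of_real r * e2)"
      by (rule rotation)
  qed
  then have "cis (pi * \<rho>) = cis (- pi * \<rho>)"
    using \<open>c \<noteq> 0\<close> by (simp add: c_e)
  then show False
    using \<open>0 < sin (pi * \<rho>)\<close> by (simp add: complex_eq_iff)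
qed

end

section \<open>Pulling back along a root\<close>

definition root_pullback :: "real \<Rightarrow> (complex \<Rightarrow> complex) \<Rightarrow> complex \<Rightarrow> complex" where
  "root_pullback \<rho> \<Phi> u = \<Phi> (exp (Ln u / of_real \<rho>))"

lemma holomorphic_on_root_pullback:
  assumes "\<Phi> holomorphic_on UNIV"
  shows "root_pullback \<rho> \<Phi> holomorphic_on - \<real>\<^sub>\<le>\<^sub>0"
proof -
  have "(\<lambda>u. exp (Ln u / of_real \<rho>)) holomorphic_on - \<real>\<^sub>\<le>\<^sub>0"
    by (intro holomorphic_intros) auto
  moreover have "\<Phi> holomorphic_on (\<lambda>u. exp (Ln u / of_real \<rho>)) ` (- \<real>\<^sub>\<le>\<^sub>0)"
    using assms by (rule holomorphic_on_subset) simp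
  ultimately show ?thesis
    using holomorphic_on_compose[of "\<lambda>u. exp (Ln u / of_real \<rho>)" "- \<real>\<^sub>\<le>\<^sub>0" \<Phi>]
    by (simp add: comp_def root_pullback_def[abs_def])
qed

lemma root_pullback_semiconj:
  assumes "\<And>z. \<Phi> (of_real lam * z) = f (\<Phi> z)" and "0 < lam" "0 < x" "ln x = \<rho> * ln lam" "\<rho> \<noteq> 0"
    and "u \<noteq> 0"
  shows "root_pullback \<rho> \<Phi> (of_real x * u) = f (root_pullback \<rho> \<Phi> u)"
proof -
  have "Ln (of_real x * u) = of_real (\<rho> * ln lam) + Ln u"
    using Ln_times_of_real[OF \<open>0 < x\<close> \<open>u \<noteq> 0\<close>] Ln_of_real[OF \<open>0 < x\<close>] assms(4) by simp
  then have "Ln (of_real x * u) / of_real \<rho> = of_real (ln lam) + Ln u / of_real \<rho>"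
    using \<open>\<rho> \<noteq> 0\<close> by (simp add: field_simps)
  then have "exp (Ln (of_real x * u) / of_real \<rho>) = of_real lam * exp (Ln u / of_real \<rho>)"
    using \<open>0 < lam\<close> by (simp add: exp_add exp_of_real)
  then show ?thesis
    by (simp add: root_pullback_def assms(1))
qed

lemma root_pullback_asymptotic:
  assumes "0 < \<rho>" "\<rho> \<le> 1" "\<beta> < pi" "1 \<le> R"
    and asym: "\<And>z. z \<in> sector \<beta> R \<Longrightarrow>
      \<exists>\<epsilon>. \<Phi> z = A * exp (z powr of_real \<rho> * c + \<epsilon>) \<and> norm \<epsilon> \<le> 1 / norm z"
    and u: "u \<in> sector (\<rho> * \<beta>) R"
  shows "\<exists>\<epsilon>. root_pullback \<rho> \<Phi> u = A * exp (c * u + \<epsilon>) \<and> norm \<epsilon> \<le> 1 / norm u"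
proof -
  define z where "z = exp (Ln u / of_real \<rho>)"
  have "u \<noteq> 0" "\<bar>Arg u\<bar> \<le> \<rho> * \<beta>" "R \<le> norm u"
    using u by (auto simp: sector_def)
  have Im: "Im (Ln u / of_real \<rho>) = Arg u / \<rho>"
    using \<open>u \<noteq> 0\<close> by (simp add: Arg_eq_Im_Ln)
  have "\<bar>Arg u / \<rho>\<bar> \<le> \<beta>"
    using \<open>\<bar>Arg u\<bar> \<le> \<rho> * \<beta>\<close> \<open>0 < \<rho>\<close> by (simp add: abs_divide divide_le_eq mult.commute)
  then have "- pi < Arg u / \<rho>" "Arg u / \<rho> \<le> pi"
    using abs_le_D1[OF \<open>\<bar>Arg u / \<rho>\<bar> \<le> \<beta>\<close>] abs_le_D2[OF \<open>\<bar>Arg u / \<rho>\<bar> \<le> \<beta>\<close>] \<open>\<beta> < pi\<close>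
    by linarith+
  then have Ln_z: "Ln z = Ln u / of_real \<rho>"
    unfolding z_def by (intro Ln_exp) (simp_all only: Im)
  have "norm u \<le> norm z"
  proof -
    have "ln (norm u) \<le> ln (norm u) / \<rho>"
      using \<open>1 \<le> R\<close> \<open>R \<le> norm u\<close> \<open>0 < \<rho>\<close> \<open>\<rho> \<le> 1\<close> by (simp add: le_divide_eq mult_left_le)
    then have "exp (ln (norm u)) \<le> exp (ln (norm u) / \<rho>)"
      by simp
    then show ?thesis
      using \<open>u \<noteq> 0\<close> by (simp add: z_def norm_exp_eq_Re)
  qed
  have "z \<in> sector \<beta> R"
    using Ln_z \<open>\<bar>Arg u / \<rho>\<bar> \<le> \<beta>\<close> Im \<open>R \<le> norm u\<close> \<open>norm u \<le> norm z\<close>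
    by (auto simp: sector_def z_def Arg_eq_Im_Ln)
  moreover have "z powr of_real \<rho> = u"
    using Ln_z \<open>0 < \<rho>\<close> \<open>u \<noteq> 0\<close> by (simp add: powr_def z_def)
  moreover have "1 / norm z \<le> 1 / norm u"
    using \<open>norm u \<le> norm z\<close> \<open>1 \<le> R\<close> \<open>R \<le> norm u\<close> by (intro frac_le) auto
  ultimately show ?thesis
    using asym[of z] unfolding z_def root_pullback_def by (metis mult.commute order_trans)
qed

lemma root_pullback_rotation:
  assumes "Ln u = Ln v + of_real (2 * pi * \<rho>) * \<i>" "\<rho> \<noteq> 0"
  shows "root_pullback \<rho> \<Phi> u = root_pullback \<rho> \<Phi> v"
proof -
  have "Ln u / of_real \<rho> = Ln v / of_real \<rho> + 2 * pi * \<i>"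
    using assms by (simp add: field_simps)
  then show ?thesis
    by (simp add: root_pullback_def exp_add)
qed

lemma root_pullback_of_real_powr:
  "0 < y \<Longrightarrow> \<rho> \<noteq> 0 \<Longrightarrow> root_pullback \<rho> \<Phi> (of_real (y powr \<rho>)) = \<Phi> (of_real y)"
  by (simp add: root_pullback_def Ln_of_real ln_powr exp_of_real)

lemma exp_asymptotic_semiconjugacy_root_pullback:
  assumes "2 \<le> degree q" "2 \<le> d" "\<Phi> holomorphic_on UNIV"
    and "\<And>z. \<Phi> (of_real lam * z) = poly q (\<Phi> z)" "0 < lam" "ln (real d) = \<rho> * ln lam"
    and "0 < \<rho>" "\<rho> \<le> 1" "0 < \<beta>" "\<beta> < pi" "1 \<le> R" "A \<noteq> 0"
    and "\<And>z. z \<in> sector \<beta> R \<Longrightarrow>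
      \<exists>\<epsilon>. \<Phi> z = A * exp (z powr of_real \<rho> * c + \<epsilon>) \<and> norm \<epsilon> \<le> 1 / norm z"
  shows "exp_asymptotic_semiconjugacy q d (root_pullback \<rho> \<Phi>) A c (\<rho> * \<beta>) R"
proof
  show "root_pullback \<rho> \<Phi> (of_nat d * u) = poly q (root_pullback \<rho> \<Phi> u)" if "u \<noteq> 0" for u
    using root_pullback_semiconj[of \<Phi> lam "poly q" "real d" \<rho> u] assms(2,4-7) that by simp
  show "\<exists>\<epsilon>. root_pullback \<rho> \<Phi> u = A * exp (c * u + \<epsilon>) \<and> norm \<epsilon> \<le> 1 / norm u"
    if "u \<in> sector (\<rho> * \<beta>) R" for u
    by (rule root_pullback_asymptotic[OF assms(7,8,10,11,13) that])
qed (use assms holomorphic_on_root_pullback in auto)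

lemma sector_asymptotic_if_constant:
  assumes "0 < L" "\<beta>' < \<beta>" and const: "\<And>w. \<bar>Im w\<bar> < \<beta> / L \<Longrightarrow> F w = c"
    and asym: "\<forall>\<delta> > 0. \<exists>R. \<forall>z. z \<noteq> 0 \<and> \<bar>Arg z\<bar> \<le> \<beta>' \<and> R \<le> norm z \<longrightarrow>
      \<Phi> z = A * exp (z powr w * F (Ln z / of_real L) + e z) \<and> norm (e z) \<le> \<delta> * norm z powr (- 1)"
  obtains R where "1 \<le> R"
    "\<And>z. z \<in> sector \<beta>' R \<Longrightarrow> \<exists>\<epsilon>. \<Phi> z = A * exp (z powr w * c + \<epsilon>) \<and> norm \<epsilon> \<le> 1 / norm z"
proof -
  obtain R where R: "\<forall>z. z \<noteq> 0 \<and> \<bar>Arg z\<bar> \<le> \<beta>' \<and> R \<le> norm z \<longrightarrow>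
      \<Phi> z = A * exp (z powr w * F (Ln z / of_real L) + e z) \<and> norm (e z) \<le> 1 * norm z powr (- 1)"
    using asym zero_less_one by blast
  show ?thesis
  proof (rule that[of "max R 1"])
    fix z assume z: "z \<in> sector \<beta>' (max R 1)"
    then have "\<bar>Arg z\<bar> / L < \<beta> / L"
      using \<open>\<beta>' < \<beta>\<close> \<open>0 < L\<close> by (intro divide_strict_right_mono) (auto simp: sector_def)
    then have "F (Ln z / of_real L) = c"
      using z \<open>0 < L\<close> by (intro const) (simp add: sector_def Arg_eq_Im_Ln abs_divide)
    then show "\<exists>\<epsilon>. \<Phi> z = A * exp (z powr w * c + \<epsilon>) \<and> norm \<epsilon> \<le> 1 / norm z"
      using R[rule_format, of z] z by (auto simp: sector_def powr_minus_divide)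
  qed simp
qed

theorem corollary3:
  fixes p :: "real poly" and d :: nat and lam \<beta> :: real
    and \<Phi> :: "complex \<Rightarrow> complex" and F :: "complex \<Rightarrow> complex"
  defines "pc \<equiv> poly (map_poly complex_of_real p)"
  defines "\<rho> \<equiv> log lam (real d)"
  defines "S \<equiv> {w :: complex. \<bar>Im w\<bar> < \<beta> / ln lam}"
  assumes deg: "degree p = d" and d2: "d \<ge> 2"
    and p0: "poly p 0 = 0"
    and pder: "poly (pderiv p) 0 = lam" and lam: "lam > 1"
    and beta: "\<beta> > 0"
    and fatou: "angular_region \<beta> \<subseteq> fatou_component_infty pc"
    and Phi_entire: "\<Phi> holomorphic_on UNIV"
    and Phi_eq: "\<And>z. \<Phi> (complex_of_real lam * z) = pc (\<Phi> z)"
    and Phi0: "\<Phi> 0 = 0" and Phi_deriv: "deriv \<Phi> 0 = 1"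
    and F_holo: "F holomorphic_on S"
    and F_per: "\<And>w. w \<in> S \<Longrightarrow> F (w + 1) = F w"
    and F_asym: "\<And>\<epsilon> M. \<epsilon> > 0 \<Longrightarrow> M > 0 \<Longrightarrow>
        \<exists>e :: complex \<Rightarrow> complex. \<forall>\<delta> > 0. \<exists>R. \<forall>z. z \<noteq> 0 \<and> \<bar>Arg z\<bar> \<le> \<beta> - \<epsilon> \<and> R \<le> norm z \<longrightarrow>
          \<Phi> z = complex_of_real (lead_coeff p) powr (- 1 / of_nat (d - 1))
                 * exp (z powr complex_of_real \<rho> * F (Ln z / complex_of_real (ln lam)) + e z)
          \<and> norm (e z) \<le> \<delta> * norm z powr (- M)"
    and rho: "\<rho> < 1 / 2"
  shows "\<not> (\<exists>c. \<forall>w\<in>S. F w = c)"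
proof
  assume "\<exists>c. \<forall>w\<in>S. F w = c"
  then obtain c where F_const: "\<And>w. w \<in> S \<Longrightarrow> F w = c"
    by blast
  define q where "q = map_poly complex_of_real p"
  define A where "A = complex_of_real (lead_coeff p) powr (- 1 / of_nat (d - 1))"
  define \<beta>' where "\<beta>' = min (\<beta> / 2) 1"
  have "0 < \<beta>'" "\<beta>' < \<beta>" "\<beta>' < pi" and "0 < ln lam"
    using beta lam pi_gt3 by (auto simp: \<beta>'_def)
  have ln_d: "ln (real d) = \<rho> * ln lam" and "0 < \<rho>"
    using lam d2 by (simp_all add: \<rho>_def log_def)
  have const: "\<And>w. \<bar>Im w\<bar> < \<beta> / ln lam \<Longrightarrow> F w = c"
    using F_const by (simp add: S_def)
  obtain e where "\<forall>\<delta> > 0. \<exists>R. \<forall>z. z \<noteq> 0 \<and> \<bar>Arg z\<bar> \<le> \<beta>' \<and> R \<le> norm z \<longrightarrow>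
      \<Phi> z = A * exp (z powr of_real \<rho> * F (Ln z / of_real (ln lam)) + e z)
      \<and> norm (e z) \<le> \<delta> * norm z powr (- 1)"
    using F_asym[of "\<beta> - \<beta>'" 1] \<open>\<beta>' < \<beta>\<close> unfolding A_def
    by (simp only: diff_gt_0_iff_gt diff_diff_eq2 add_diff_cancel_left' zero_less_one) blast
  then obtain R where "1 \<le> R" and Phi_asym: "\<And>z. z \<in> sector \<beta>' R \<Longrightarrow>
      \<exists>\<epsilon>. \<Phi> z = A * exp (z powr of_real \<rho> * c + \<epsilon>) \<and> norm \<epsilon> \<le> 1 / norm z"
    using sector_asymptotic_if_constant[where F = F, OF \<open>0 < ln lam\<close> \<open>\<beta>' < \<beta>\<close> const] by blast
  have "2 \<le> degree q" "\<And>z. \<Phi> (of_real lam * z) = poly q (\<Phi> z)" "A \<noteq> 0"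
    using deg d2 Phi_eq by (auto simp: q_def pc_def A_def powr_def degree_map_poly)
  then interpret exp_asymptotic_semiconjugacy q d "root_pullback \<rho> \<Phi>" A c "\<rho> * \<beta>'" R
    using exp_asymptotic_semiconjugacy_root_pullback[OF _ d2 Phi_entire _ _ ln_d \<open>0 < \<rho>\<close> _
        \<open>0 < \<beta>'\<close> \<open>\<beta>' < pi\<close> \<open>1 \<le> R\<close> _ Phi_asym] lam rho
    by simp
  have "(\<Phi> has_field_derivative 1) (at 0)"
    using Phi_entire Phi_deriv
    by (metis DERIV_deriv_iff_field_differentiable UNIV_I open_UNIV
        holomorphic_on_imp_differentiable_at)
  then obtain y where "0 < y" "\<Phi> (of_real y) \<in> angular_region \<beta>"
    using exists_pos_real_in_angular_region Phi0 beta by blast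
  then have "\<Phi> (of_real y) \<in> fatou_component_infty (poly q)"
    using fatou by (auto simp: pc_def q_def)
  then have "filterlim (\<lambda>n. (poly q ^^ n) (root_pullback \<rho> \<Phi> (of_real (y powr \<rho>))))
      at_infinity sequentially"
    using fatou_component_infty_poly_orbit_tendsto_infinity[OF degree_q] root_pullback_of_real_powr
      \<open>0 < y\<close> \<open>0 < \<rho>\<close> by simp
  moreover have "\<And>u v. Ln u = Ln v + of_real (2 * pi * \<rho>) * \<i> \<Longrightarrow>
      root_pullback \<rho> \<Phi> u = root_pullback \<rho> \<Phi> v"
    using root_pullback_rotation \<open>0 < \<rho>\<close> by simp
  ultimately have "1 / 2 \<le> \<rho>"
    using rotation_invariant_imp_ge_half[of "y powr \<rho>" \<rho>] \<open>0 < y\<close> \<open>0 < \<rho>\<close> by simp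
  with rho show False
    by simp
qed

end
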